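(* If a segment $s_i$ contains a reflection point $p_j$ of $\mathrm{OPT}$, then $s_i$ has no other intersection with $\mathrm{OPT}$; in particular no other point $p_{j'}$ of $\mathrm{OPT}$ lies on $s_i$.
   Context: Instance: vertical line segments $s_1,\dots,s_n$ in $\mathbb{R}^2$, each of length $1$, with pairwise distinct $x$-coordinates. A tour is a cyclic sequence of points $p_1,\dots,p_\sigma$, each on some segment, with every segment containing at least one $p_j$; the straight segments joining consecutive points are legs; cost is total length. $\mathrm{OPT}$ is a fixed minimum-cost tour, oriented, with no two consecutive points on the same segment and not self-crossing. A point $p_j$ of $\mathrm{OPT}$ on segment $s$ is a reflection point if both incident legs lie in the half-plane $x\le x(s)$ or both lie in $x\ge x(s)$. *)

theory Defs
  imports "HOL-Analysis.Analysis"
begin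

text \<open>Points of the plane are pairs (x,y) :: real \<times> real; the product metric on
real \<times> real is the Euclidean one.\<close>

definition seg :: "(nat \<Rightarrow> real) \<Rightarrow> (nat \<Rightarrow> real) \<Rightarrow> nat \<Rightarrow> (real \<times> real) set" where
  "seg x y i = {(x i, t) | t. y i \<le> t \<and> t \<le> y i + 1}"

definition nxt :: "'a list \<Rightarrow> nat \<Rightarrow> nat" where
  "nxt ps k = (k + 1) mod length ps"

definition prv :: "'a list \<Rightarrow> nat \<Rightarrow> nat" where
  "prv ps k = (k + length ps - 1) mod length ps"

definition leg :: "(real \<times> real) list \<Rightarrow> nat \<Rightarrow> (real \<times> real) set" where
  "leg ps k = closed_segment (ps ! k) (ps ! nxt ps k)"

definition is_tour :: "nat \<Rightarrow> (nat \<Rightarrow> real) \<Rightarrow> (nat \<Rightarrow> real) \<Rightarrow> (real \<times> real) list \<Rightarrow> bool" where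
  "is_tour n x y ps \<longleftrightarrow> ps \<noteq> [] \<and>
     (\<forall>p \<in> set ps. \<exists>i<n. p \<in> seg x y i) \<and>
     (\<forall>i<n. \<exists>p \<in> set ps. p \<in> seg x y i)"

definition tour_cost :: "(real \<times> real) list \<Rightarrow> real" where
  "tour_cost ps = (\<Sum>k<length ps. dist (ps ! k) (ps ! nxt ps k))"

definition tour_set :: "(real \<times> real) list \<Rightarrow> (real \<times> real) set" where
  "tour_set ps = (\<Union>k<length ps. leg ps k)"

definition orient :: "real \<times> real \<Rightarrow> real \<times> real \<Rightarrow> real \<times> real \<Rightarrow> real" where
  "orient a b c = (fst b - fst a) * (snd c - snd a) - (snd b - snd a) * (fst c - fst a)"

definition proper_cross :: "real \<times> real \<Rightarrow> real \<times> real \<Rightarrow> real \<times> real \<Rightarrow> real \<times> real \<Rightarrow> bool" where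
  "proper_cross a b c d \<longleftrightarrow>
     orient a b c * orient a b d < 0 \<and> orient c d a * orient c d b < 0"

definition self_crossing :: "(real \<times> real) list \<Rightarrow> bool" where
  "self_crossing ps \<longleftrightarrow> (\<exists>k < length ps. \<exists>l < length ps. k \<noteq> l \<and>
     proper_cross (ps ! k) (ps ! nxt ps k) (ps ! l) (ps ! nxt ps l))"

definition no_consec_same_seg :: "nat \<Rightarrow> (nat \<Rightarrow> real) \<Rightarrow> (nat \<Rightarrow> real) \<Rightarrow> (real \<times> real) list \<Rightarrow> bool" where
  "no_consec_same_seg n x y ps \<longleftrightarrow>
     (\<forall>k < length ps. \<not> (\<exists>i<n. ps ! k \<in> seg x y i \<and> ps ! nxt ps k \<in> seg x y i))"

definition reflection_point :: "(nat \<Rightarrow> real) \<Rightarrow> (nat \<Rightarrow> real) \<Rightarrow> (real \<times> real) list \<Rightarrow> nat \<Rightarrow> nat \<Rightarrow> bool" where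
  "reflection_point x y ps i j \<longleftrightarrow> ps ! j \<in> seg x y i \<and>
     ((leg ps (prv ps j) \<subseteq> {z. fst z \<le> x i} \<and> leg ps j \<subseteq> {z. fst z \<le> x i}) \<or>
      (leg ps (prv ps j) \<subseteq> {z. fst z \<ge> x i} \<and> leg ps j \<subseteq> {z. fst z \<ge> x i}))"

end

theory Submission
  imports Defs
begin

text \<open>Let a and b be the tour points before and after the reflection point p on segment s.
  They lie on other segments, hence strictly on one side of the line carrying s, so p is not on
  the straight segment from a to b and cutting p out of the tour strictly shortens it. By
  optimality the shortened cycle is no longer a tour, so none of its points lies on s; and a
  point of s on one of its legs could be spliced in at no cost, again giving a tour cheaper than
  the optimum. The two legs at p meet the line of s only in p.\<close>

fun polyline_length :: "'a::metric_space list \<Rightarrow> real" where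
  "polyline_length (a # b # xs) = dist a b + polyline_length (b # xs)"
| "polyline_length _ = 0"

fun polyline_set :: "'a::real_vector list \<Rightarrow> 'a set" where
  "polyline_set (a # b # xs) = closed_segment a b \<union> polyline_set (b # xs)"
| "polyline_set _ = {}"

lemma polyline_length_conv_sum:
  "polyline_length xs = (\<Sum>k<length xs - 1. dist (xs ! k) (xs ! Suc k))"
proof (induction xs rule: polyline_length.induct)
  case (1 a b xs)
  have "length (a # b # xs) - 1 = Suc (length (b # xs) - 1)" by simp
  then show ?case using "1.IH" by (simp only: sum.lessThan_Suc_shift) simp
qed simp_all

lemma polyline_set_conv_UN:
  "polyline_set xs = (\<Union>k<length xs - 1. closed_segment (xs ! k) (xs ! Suc k))"
  by (induction xs rule: polyline_set.induct) (auto simp: lessThan_Suc_eq_insert_0)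

lemma polyline_length_append:
  "xs \<noteq> [] \<Longrightarrow> ys \<noteq> [] \<Longrightarrow>
     polyline_length (xs @ ys) = polyline_length xs + dist (last xs) (hd ys) + polyline_length ys"
  by (induction xs rule: polyline_length.induct) (auto simp: neq_Nil_conv)

lemma polyline_set_append:
  "xs \<noteq> [] \<Longrightarrow> ys \<noteq> [] \<Longrightarrow>
     polyline_set (xs @ ys) = polyline_set xs \<union> closed_segment (last xs) (hd ys) \<union> polyline_set ys"
  by (induction xs rule: polyline_set.induct) (auto simp: neq_Nil_conv)

lemma tour_cost_eq_polyline_length:
  assumes "ps \<noteq> []"
  shows "tour_cost ps = polyline_length ps + dist (last ps) (hd ps)"
proof -
  obtain m where m: "length ps = Suc m" using assms by (cases ps) auto
  have "tour_cost ps = (\<Sum>k<m. dist (ps ! k) (ps ! nxt ps k)) + dist (ps ! m) (ps ! nxt ps m)"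
    unfolding tour_cost_def m by simp
  also have "\<dots> = polyline_length ps + dist (last ps) (hd ps)"
    using m assms by (simp add: polyline_length_conv_sum nxt_def last_conv_nth hd_conv_nth)
  finally show ?thesis .
qed

lemma tour_set_eq_polyline_set:
  assumes "ps \<noteq> []"
  shows "tour_set ps = polyline_set ps \<union> closed_segment (last ps) (hd ps)"
proof -
  obtain m where m: "length ps = Suc m" using assms by (cases ps) auto
  have "tour_set ps = (\<Union>k<m. closed_segment (ps ! k) (ps ! nxt ps k)) \<union> leg ps m"
    unfolding tour_set_def leg_def m by (simp add: lessThan_Suc Un_commute)
  also have "\<dots> = polyline_set ps \<union> closed_segment (last ps) (hd ps)"
    using m assms by (simp add: polyline_set_conv_UN nxt_def leg_def last_conv_nth hd_conv_nth)
  finally show ?thesis .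
qed

lemma tour_cost_Cons:
  "R \<noteq> [] \<Longrightarrow> tour_cost (p # R) = dist p (hd R) + polyline_length R + dist (last R) p"
  using polyline_length_append[of "[p]" R] by (simp add: tour_cost_eq_polyline_length)

lemma tour_set_Cons:
  "R \<noteq> [] \<Longrightarrow> tour_set (p # R) = closed_segment p (hd R) \<union> polyline_set R \<union> closed_segment (last R) p"
  using polyline_set_append[of "[p]" R] by (simp add: tour_set_eq_polyline_set)

lemma tour_cost_rotate1: "tour_cost (rotate1 ps) = tour_cost ps"
proof (cases ps)
  case (Cons p R)
  show ?thesis
  proof (cases "R = []")
    case False
    have "tour_cost (R @ [p]) = polyline_length (R @ [p]) + dist p (hd R)"
      using False by (simp add: tour_cost_eq_polyline_length)
    also have "\<dots> = tour_cost (p # R)"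
      using False by (simp add: polyline_length_append tour_cost_Cons)
    finally show ?thesis using Cons by simp
  qed (use Cons in simp)
qed simp

lemma tour_set_rotate1: "tour_set (rotate1 ps) = tour_set ps"
proof (cases ps)
  case (Cons p R)
  show ?thesis
  proof (cases "R = []")
    case False
    have "tour_set (R @ [p]) = polyline_set (R @ [p]) \<union> closed_segment p (hd R)"
      using False by (simp add: tour_set_eq_polyline_set)
    also have "\<dots> = tour_set (p # R)"
      using False by (auto simp: polyline_set_append tour_set_Cons)
    finally show ?thesis using Cons by simp
  qed (use Cons in simp)
qed simp

lemma tour_cost_rotate: "tour_cost (rotate m ps) = tour_cost ps"
  by (induction m) (simp_all add: tour_cost_rotate1)

lemma tour_set_rotate: "tour_set (rotate m ps) = tour_set ps"
  by (induction m) (simp_all add: tour_set_rotate1)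

lemma mem_closed_segment_iff_dist:
  fixes a b z :: "'a::euclidean_space"
  shows "z \<in> closed_segment a b \<longleftrightarrow> dist a b = dist a z + dist z b"
  using between[of a b z] between_mem_segment[of a b z] by simp

lemma dist_less_detour_if_not_in_segment:
  fixes a b p :: "'a::euclidean_space"
  assumes "p \<notin> closed_segment a b"
  shows "dist a b < dist a p + dist p b"
  using dist_triangle[of a b p] assms mem_closed_segment_iff_dist by fastforce

lemma polyline_insert_point:
  assumes "z \<in> polyline_set R"
  shows "\<exists>T. set T = insert z (set R) \<and> hd T = hd R \<and> last T = last R
           \<and> polyline_length T = polyline_length (R :: 'a::euclidean_space list)"
  using assms
proof (induction R rule: polyline_set.induct)
  case (1 a b xs)
  show ?case
  proof (cases "z \<in> closed_segment a b")
    case True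
    then show ?thesis
      by (intro exI[of _ "a # z # b # xs"]) (auto simp: mem_closed_segment_iff_dist)
  next
    case False
    then obtain T where T: "set T = insert z (set (b # xs))" "hd T = b" "last T = last (b # xs)"
        "polyline_length T = polyline_length (b # xs)"
      using "1.IH" "1.prems" by auto
    then have "T \<noteq> []" by auto
    then have "polyline_length (a # T) = dist a b + polyline_length T"
      using T(2) by (cases T) auto
    then show ?thesis
      using T \<open>T \<noteq> []\<close> by (intro exI[of _ "a # T"]) auto
  qed
qed simp_all

lemma fst_mem_closed_segment:
  fixes a b z :: "'a::real_vector \<times> 'b::real_vector"
  assumes "z \<in> closed_segment a b"
  shows "fst z \<in> closed_segment (fst a) (fst b)"
  using assms closed_segment_linear_image[OF linear_fst, of a b] by auto

lemma closed_segment_fst_eq_start: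
  fixes p b z :: "'a::real_vector \<times> 'b::real_vector"
  assumes "z \<in> closed_segment p b" "fst z = fst p" "fst b \<noteq> fst p"
  shows "z = p"
proof -
  obtain u where u: "z = (1 - u) *\<^sub>R p + u *\<^sub>R b"
    using assms(1) in_segment(1) by blast
  have "fst z = fst p + u *\<^sub>R (fst b - fst p)"
    unfolding u by (simp add: algebra_simps)
  then have "u *\<^sub>R (fst b - fst p) = 0"
    using assms(2) by simp
  then have "u = 0" using assms(3) by simp
  then show ?thesis using u by simp
qed

lemma dist_less_detour_if_fst_beyond:
  fixes a b p :: "real \<times> real"
  assumes "(fst a < fst p \<and> fst b < fst p) \<or> (fst a > fst p \<and> fst b > fst p)"
  shows "dist a b < dist a p + dist p b"
proof (rule dist_less_detour_if_not_in_segment)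
  show "p \<notin> closed_segment a b"
    using fst_mem_closed_segment[of p a b] assms
    by (auto simp: closed_segment_eq_real_ivl split: if_splits)
qed

lemma fst_seg: "q \<in> seg x y i \<Longrightarrow> fst q = x i"
  unfolding seg_def by auto

lemma tour_point_in_seg_iff:
  assumes "inj_on x {..<n}" "is_tour n x y ps" "i < n" "q \<in> set ps"
  shows "q \<in> seg x y i \<longleftrightarrow> fst q = x i"
proof
  assume "fst q = x i"
  obtain i' where "i' < n" "q \<in> seg x y i'"
    using assms(2,4) unfolding is_tour_def by blast
  moreover from this have "x i' = x i" using \<open>fst q = x i\<close> fst_seg by metis
  ultimately show "q \<in> seg x y i" using assms(1,3) by (metis inj_onD lessThan_iff)
qed (rule fst_seg)

text \<open>The x-coordinates being distinct, p lies on no segment but its own.\<close>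
lemma is_tour_exchange:
  assumes inj: "inj_on x {..<n}" and i: "i < n"
    and tour: "is_tour n x y (p # R)" and p: "p \<in> seg x y i" and q: "q \<in> seg x y i"
    and T: "set T = insert q (set R)"
  shows "is_tour n x y T"
  unfolding is_tour_def
proof (intro conjI ballI allI impI)
  show "T \<noteq> []" using T by auto
next
  fix r assume "r \<in> set T"
  then show "\<exists>i<n. r \<in> seg x y i" using tour T i q unfolding is_tour_def by auto
next
  fix i' assume i': "i' < n"
  then obtain r where r: "r \<in> set (p # R)" "r \<in> seg x y i'"
    using tour unfolding is_tour_def by blast
  show "\<exists>r\<in>set T. r \<in> seg x y i'"
  proof (cases "r = p")
    case True
    then have "i' = i" using inj i i' p r(2) fst_seg by (metis inj_onD lessThan_iff)
    then show ?thesis using T q by auto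
  next
    case False
    then show ?thesis using r T by auto
  qed
qed

lemma nxt_prv:
  assumes "k < length ps"
  shows "nxt ps (prv ps k) = k"
proof -
  have "nxt ps (prv ps k) = (k + length ps - 1 + 1) mod length ps"
    unfolding nxt_def prv_def by (simp add: mod_Suc_eq)
  also have "k + length ps - 1 + 1 = k + length ps" using assms by linarith
  finally show ?thesis using assms by simp
qed

lemma rotate_conv_nth_Cons:
  assumes "j < length ps" "2 \<le> length ps"
  obtains R where "rotate j ps = ps ! j # R" "R \<noteq> []"
    "hd R = ps ! nxt ps j" "last R = ps ! prv ps j"
    "\<And>k. k < length ps \<Longrightarrow> k \<noteq> j \<Longrightarrow> ps ! k \<in> set R"
proof
  define N where "N = length ps"
  define R where "R = drop (Suc j) ps @ take j ps"
  show rot: "rotate j ps = ps ! j # R"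
    using assms(1) unfolding R_def by (simp add: rotate_drop_take Cons_nth_drop_Suc)
  show "R \<noteq> []" using assms unfolding R_def by auto
  moreover have "N = Suc (length R)"
    using arg_cong[OF rot, of length] unfolding N_def by simp
  ultimately have "hd R = rotate j ps ! 1" "last R = rotate j ps ! (N - 1)"
    by (simp_all add: rot hd_conv_nth last_conv_nth nth_Cons')
  moreover have "(j + (N - 1)) mod N = prv ps j"
    using assms(2) unfolding prv_def N_def by simp
  ultimately show "hd R = ps ! nxt ps j" "last R = ps ! prv ps j"
    using assms by (simp_all add: nth_rotate nxt_def N_def)
  fix k assume "k < length ps" "k \<noteq> j"
  then show "ps ! k \<in> set R"
    unfolding R_def
    by (cases "k < j") (auto simp: in_set_conv_nth intro: exI[of _ k] exI[of _ "k - Suc j"])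
qed

lemma reflection_point_neighbours:
  assumes inj: "inj_on x {..<n}" and tour: "is_tour n x y ps"
    and nocons: "no_consec_same_seg n x y ps"
    and i: "i < n" and j: "j < length ps" and refl: "reflection_point x y ps i j"
  shows "2 \<le> length ps"
    and "(fst (ps ! prv ps j) < x i \<and> fst (ps ! nxt ps j) < x i) \<or>
         (fst (ps ! prv ps j) > x i \<and> fst (ps ! nxt ps j) > x i)"
proof -
  have p: "ps ! j \<in> seg x y i" using refl unfolding reflection_point_def by blast
  have "0 < length ps" using j by linarith
  then have prv: "prv ps j < length ps" and nxt: "nxt ps j < length ps"
    unfolding prv_def nxt_def by simp_all
  have b: "ps ! nxt ps j \<notin> seg x y i"
    using nocons j i p unfolding no_consec_same_seg_def by auto
  have a: "ps ! prv ps j \<notin> seg x y i"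
    using nocons prv i p nxt_prv[OF j] unfolding no_consec_same_seg_def by metis
  show "2 \<le> length ps"
  proof (rule ccontr)
    assume "\<not> 2 \<le> length ps"
    then have "length ps = 1" "j = 0" using j by linarith+
    then have "nxt ps j = j" unfolding nxt_def by simp
    then show False using b p by simp
  qed
  have "fst (ps ! prv ps j) \<noteq> x i" "fst (ps ! nxt ps j) \<noteq> x i"
    using a b prv nxt tour_point_in_seg_iff[OF inj tour i] by auto
  moreover have "ps ! prv ps j \<in> leg ps (prv ps j)" "ps ! nxt ps j \<in> leg ps j"
    unfolding leg_def by simp_all
  ultimately show "(fst (ps ! prv ps j) < x i \<and> fst (ps ! nxt ps j) < x i) \<or>
         (fst (ps ! prv ps j) > x i \<and> fst (ps ! nxt ps j) > x i)"
    using refl unfolding reflection_point_def by fastforce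
qed

lemma optimal_tour_rest_avoids_seg:
  assumes inj: "inj_on x {..<n}" and i: "i < n"
    and tour: "is_tour n x y (p # R)" and R: "R \<noteq> []" and p: "p \<in> seg x y i"
    and opt: "\<forall>T. is_tour n x y T \<longrightarrow> tour_cost (p # R) \<le> tour_cost T"
    and detour: "dist (last R) (hd R) < dist (last R) p + dist p (hd R)"
  shows "seg x y i \<inter> set R = {}" and "seg x y i \<inter> polyline_set R = {}"
proof -
  have shorter: "tour_cost R < tour_cost (p # R)"
    using detour tour_cost_Cons[OF R, of p] tour_cost_eq_polyline_length[OF R] by simp
  have no_cheaper: False
    if "set T = insert q (set R)" "q \<in> seg x y i" "tour_cost T \<le> tour_cost R" for T q
    using is_tour_exchange[OF inj i tour p that(2,1)] opt shorter that(3) by force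
  show "seg x y i \<inter> set R = {}"
    using no_cheaper[of R] by (auto simp: insert_absorb)
  show "seg x y i \<inter> polyline_set R = {}"
  proof (rule equals0I)
    fix z assume z: "z \<in> seg x y i \<inter> polyline_set R"
    then obtain T where T: "set T = insert z (set R)" "hd T = hd R" "last T = last R"
        "polyline_length T = polyline_length R"
      using polyline_insert_point by blast
    moreover have "T \<noteq> []" using T(1) by auto
    ultimately have "tour_cost T = tour_cost R"
      using R by (simp add: tour_cost_eq_polyline_length)
    then show False using no_cheaper[of T z] T(1) z by simp
  qed
qed

theorem lemma7:
  fixes n :: nat and x y :: "nat \<Rightarrow> real" and OPT :: "(real \<times> real) list"
    and i j :: nat
  assumes distinct_x: "inj_on x {..<n}"
    and tour: "is_tour n x y OPT"
    and opt: "\<forall>T. is_tour n x y T \<longrightarrow> tour_cost OPT \<le> tour_cost T"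
    and nocons: "no_consec_same_seg n x y OPT"
    and nocross: "\<not> self_crossing OPT"
    and i: "i < n" and j: "j < length OPT"
    and refl: "reflection_point x y OPT i j"
  shows "seg x y i \<inter> tour_set OPT = {OPT ! j}
         \<and> (\<forall>j' < length OPT. j' \<noteq> j \<longrightarrow> OPT ! j' \<notin> seg x y i)"
proof -
  define p where "p = OPT ! j"
  have p: "p \<in> seg x y i" using refl unfolding reflection_point_def p_def by blast
  note sides = reflection_point_neighbours[OF distinct_x tour nocons i j refl]
  obtain R where rot: "rotate j OPT = p # R" and R: "R \<noteq> []"
    and hd_R: "hd R = OPT ! nxt OPT j" and last_R: "last R = OPT ! prv OPT j"
    and rest: "\<And>k. k < length OPT \<Longrightarrow> k \<noteq> j \<Longrightarrow> OPT ! k \<in> set R"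
    using rotate_conv_nth_Cons[OF j sides(1)] unfolding p_def by blast
  have "is_tour n x y (p # R)" using tour unfolding is_tour_def rot[symmetric] by simp
  moreover have "\<forall>T. is_tour n x y T \<longrightarrow> tour_cost (p # R) \<le> tour_cost T"
    using opt tour_cost_rotate[of j OPT] by (simp add: rot)
  moreover have "dist (last R) (hd R) < dist (last R) p + dist p (hd R)"
    using dist_less_detour_if_fst_beyond sides(2) fst_seg[OF p] by (simp add: hd_R last_R)
  ultimately have avoid: "seg x y i \<inter> set R = {}" "seg x y i \<inter> polyline_set R = {}"
    using optimal_tour_rest_avoids_seg[OF distinct_x i _ R p] by blast+
  have "seg x y i \<inter> tour_set OPT \<subseteq> {p}"
  proof
    fix z assume z: "z \<in> seg x y i \<inter> tour_set OPT"
    then have "z \<in> closed_segment p (hd R) \<or> z \<in> closed_segment p (last R)"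
      using avoid(2) tour_set_Cons[OF R, of p] tour_set_rotate[of j OPT]
      by (auto simp: rot closed_segment_commute)
    moreover have "fst z = fst p" using z fst_seg[OF p] fst_seg[of z x y i] by simp
    moreover have "fst (hd R) \<noteq> fst p" "fst (last R) \<noteq> fst p"
      using sides(2) fst_seg[OF p] by (auto simp: hd_R last_R)
    ultimately show "z \<in> {p}" using closed_segment_fst_eq_start by blast
  qed
  moreover have "p \<in> tour_set OPT" unfolding tour_set_def leg_def p_def using j by auto
  ultimately show ?thesis using p rest avoid(1) unfolding p_def by auto
qed

end
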